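(* Let $\mathcal{T}_R$ be the class of all finite reflexive tournaments. For any finite set $\{O_1,\dots,O_k\}\subseteq\mathcal{T}_R$, the class $\mathrm{Av}(O_1,\dots,O_k)=\{T\in\mathcal{T}_R: O_i\not\preceq T \text{ for all } i\}$, with respect to the homomorphic image ordering $\preceq$, is not well quasi-ordered.
   Context: A reflexive tournament is a digraph $T$ (set with binary relation $E(T)$) in which every loop $(x,x)$ is an edge and, for any two distinct $x,y$, exactly one of $(x,y),(y,x)$ is an edge. A homomorphism maps edges to edges. Homomorphic image ordering: $A\preceq B$ iff there is a surjective homomorphism $B\to A$. Well quasi-ordered means no infinite strictly decreasing sequence and no infinite antichain; tournaments considered up to isomorphism. *)

theory Defs
  imports Main
begin

text \<open>A digraph given by a vertex set (natural numbers as labels; every finite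
  digraph is isomorphic to one of this form) and an edge relation.\<close>
type_synonym digraph = "nat set \<times> (nat \<times> nat) set"

definition verts :: "digraph \<Rightarrow> nat set" where "verts T = fst T"
definition edges :: "digraph \<Rightarrow> (nat \<times> nat) set" where "edges T = snd T"

definition reflexive_tournament :: "digraph \<Rightarrow> bool" where
  "reflexive_tournament T \<longleftrightarrow>
     edges T \<subseteq> verts T \<times> verts T \<and>
     (\<forall>x\<in>verts T. (x, x) \<in> edges T) \<and>
     (\<forall>x\<in>verts T. \<forall>y\<in>verts T. x \<noteq> y \<longrightarrow> ((x, y) \<in> edges T \<longleftrightarrow> (y, x) \<notin> edges T))"

definition finite_reflexive_tournament :: "digraph \<Rightarrow> bool" where
  "finite_reflexive_tournament T \<longleftrightarrow> finite (verts T) \<and> reflexive_tournament T"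

definition is_hom :: "(nat \<Rightarrow> nat) \<Rightarrow> digraph \<Rightarrow> digraph \<Rightarrow> bool" where
  "is_hom f B A \<longleftrightarrow> (\<forall>x\<in>verts B. f x \<in> verts A) \<and>
     (\<forall>x y. (x, y) \<in> edges B \<longrightarrow> (f x, f y) \<in> edges A)"

definition hom_image_le :: "digraph \<Rightarrow> digraph \<Rightarrow> bool" where
  "hom_image_le A B \<longleftrightarrow> (\<exists>f. is_hom f B A \<and> f ` verts B = verts A)"

definition Av :: "digraph set \<Rightarrow> digraph \<Rightarrow> bool" where
  "Av Os T \<longleftrightarrow> finite_reflexive_tournament T \<and> (\<forall>H\<in>Os. \<not> hom_image_le H T)"

definition wqo_hom_class :: "(digraph \<Rightarrow> bool) \<Rightarrow> bool" where
  "wqo_hom_class C \<longleftrightarrow>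
     \<not> (\<exists>g :: nat \<Rightarrow> digraph. (\<forall>i. C (g i)) \<and>
          (\<forall>i. hom_image_le (g (Suc i)) (g i) \<and> \<not> hom_image_le (g i) (g (Suc i)))) \<and>
     \<not> (\<exists>g :: nat \<Rightarrow> digraph. (\<forall>i. C (g i)) \<and>
          (\<forall>i j. i \<noteq> j \<longrightarrow> \<not> hom_image_le (g i) (g j)))"

end

theory Submission
  imports Defs
begin

text \<open>Let \<open>P\<^sub>n\<close> be the transitive tournament on \<open>0, \<dots>, n - 1\<close> in which larger vertices
  beat smaller ones, with the arcs of the Hamiltonian path \<open>0, 1, \<dots>, n - 1\<close> reversed.
  If a homomorphism into a reflexive tournament identifies two vertices \<open>x, y\<close>, it must also
  identify every vertex beating exactly one of them, since otherwise its image would be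
  joined to the common image of \<open>x\<close> and \<open>y\<close> in both directions. In \<open>P\<^sub>n\<close>, for \<open>n \<ge> 5\<close>, this
  propagates from any identified pair to the whole vertex set, so every homomorphic image of
  \<open>P\<^sub>n\<close> has either one or \<open>n\<close> vertices. Hence the \<open>P\<^sub>n\<close> with \<open>n\<close> larger than all the
  excluded tournaments form an infinite antichain in \<open>Av(O\<^sub>1, \<dots>, O\<^sub>k)\<close>; this is where
  one-vertex \<open>O\<^sub>i\<close>, which are images of every tournament, must be ruled out.\<close>

lemma reflexive_tournament_hom_merge:
  assumes "reflexive_tournament A" and "is_hom f B A"
    and "x \<in> verts B" "v \<in> verts B"
    and "(v, x) \<in> edges B" "(y, v) \<in> edges B" "f y = f x"
  shows "f v = f x"
  using assms unfolding reflexive_tournament_def is_hom_def by metis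

definition path_tournament :: "nat \<Rightarrow> digraph" where
  "path_tournament n =
     ({..<n}, {(i, j). i < n \<and> j < n \<and> (i = j \<or> j = Suc i \<or> Suc j < i)})"

lemma verts_path_tournament [simp]: "verts (path_tournament n) = {..<n}"
  by (simp add: path_tournament_def verts_def)

lemma edges_path_tournament:
  "(i, j) \<in> edges (path_tournament n) \<longleftrightarrow> i < n \<and> j < n \<and> (i = j \<or> j = Suc i \<or> Suc j < i)"
  by (simp add: path_tournament_def edges_def)

lemma finite_reflexive_tournament_path_tournament:
  "finite_reflexive_tournament (path_tournament n)"
  unfolding finite_reflexive_tournament_def reflexive_tournament_def
  by (auto simp: edges_path_tournament)

lemma path_tournament_hom_merge:
  assumes A: "reflexive_tournament A" and f: "is_hom f (path_tournament n) A"
    and x: "x < n" and y: "y < n" and v: "v < n" and "f x = f y"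
    and "(v, x) \<in> edges (path_tournament n) \<longleftrightarrow> (v, y) \<notin> edges (path_tournament n)"
  shows "f v = f x"
proof -
  have tournament: "(i, j) \<in> edges (path_tournament n) \<longleftrightarrow> (j, i) \<notin> edges (path_tournament n)"
    if "i < n" "j < n" "i \<noteq> j" for i j
    using that by (auto simp: edges_path_tournament)
  consider "v = x" | "v = y"
    | "v \<noteq> y" "(v, x) \<in> edges (path_tournament n)" "(y, v) \<in> edges (path_tournament n)"
    | "v \<noteq> x" "(v, y) \<in> edges (path_tournament n)" "(x, v) \<in> edges (path_tournament n)"
    using assms(7) tournament[OF v x] tournament[OF v y] by blast
  then show ?thesis
  proof cases
    case 3
    show ?thesis
      by (rule reflexive_tournament_hom_merge[OF A f _ _ 3(2,3)]) (use x v \<open>f x = f y\<close> in simp_all)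
  next
    case 4
    have "f v = f y"
      by (rule reflexive_tournament_hom_merge[OF A f _ _ 4(2,3)]) (use y v \<open>f x = f y\<close> in simp_all)
    then show ?thesis using \<open>f x = f y\<close> by simp
  qed (use \<open>f x = f y\<close> in simp_all)
qed

lemma path_tournament_hom_merge_first:
  assumes A: "reflexive_tournament A" and f: "is_hom f (path_tournament n) A"
    and "x < y" "y < n" "f x = f y"
  shows "f 0 = f y"
  using assms(3,5)
proof (induction x)
  case (Suc x)
  have "f x = f (Suc x)"
    by (rule path_tournament_hom_merge[OF A f, of "Suc x" y x])
      (use Suc.prems \<open>y < n\<close> in \<open>auto simp: edges_path_tournament\<close>)
  then show ?case using Suc by simp
qed simp

lemma path_tournament_hom_merge_last:
  assumes A: "reflexive_tournament A" and f: "is_hom f (path_tournament n) A"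
    and "x < y" "y < n" "f x = f y"
  shows "f (n - 1) = f x"
proof -
  have propagate: "f k = f x \<longrightarrow> f (n - 1) = f x" if "k \<le> n - 1" "y \<le> k" for k
    using that
  proof (induction k rule: inc_induct)
    case (step k)
    have "f k = f x \<Longrightarrow> f (Suc k) = f x"
      by (rule path_tournament_hom_merge[OF A f, of x k "Suc k"])
        (use step.hyps step.prems \<open>x < y\<close> in \<open>auto simp: edges_path_tournament\<close>)
    then show ?case using step by simp
  qed simp
  show ?thesis
    using propagate[of y] assms(3-5) by (simp del: One_nat_def)
qed

lemma path_tournament_hom_const_of_ends:
  assumes A: "reflexive_tournament A" and f: "is_hom f (path_tournament n) A"
    and "5 \<le> n" and ends: "f 0 = f (n - 1)"
    and "k < n"
  shows "f k = f 0"
proof -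
  note merge = path_tournament_hom_merge[OF A f]
  have middle: "f v = f 0" if "1 < v" "v < n - 2" for v
    by (rule merge[of 0 "n - 1"]) (use that ends \<open>5 \<le> n\<close> in \<open>auto simp: edges_path_tournament\<close>)
  have "f 1 = f 2"
    by (rule merge[of 2 "n - 1"])
      (use ends middle[of 2] \<open>5 \<le> n\<close> in \<open>auto simp: edges_path_tournament\<close>)
  then have first: "f 1 = f 0" using middle[of 2] \<open>5 \<le> n\<close> by simp
  have last_but_one: "f (n - 2) = f 0"
    by (rule merge[of 0 "n - 3"])
      (use middle[of "n - 3"] \<open>5 \<le> n\<close> in \<open>auto simp: edges_path_tournament\<close>)
  consider "k = 0" | "k = 1" | "1 < k" "k < n - 2" | "k = n - 2" | "k = n - 1"
    using \<open>k < n\<close> by linarith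
  then show ?thesis
    by cases (use middle first last_but_one ends in simp_all)
qed

lemma path_tournament_hom_inj_or_const:
  assumes A: "reflexive_tournament A" and f: "is_hom f (path_tournament n) A" and "5 \<le> n"
  shows "inj_on f {..<n} \<or> f ` {..<n} = {f 0}"
proof (cases "inj_on f {..<n}")
  case False
  then obtain a b where "a < n" "b < n" "a \<noteq> b" "f a = f b"
    unfolding inj_on_def by auto
  then have pair: "min a b < max a b" "max a b < n" "f (min a b) = f (max a b)"
    by (auto simp: min_def max_def)
  have "f 0 = f (max a b)"
    using path_tournament_hom_merge_first[OF A f pair] .
  moreover have "f (n - 1) = f (min a b)"
    using path_tournament_hom_merge_last[OF A f pair] .
  ultimately have "f 0 = f (n - 1)"
    using pair(3) by simp
  then have "f ` {..<n} \<subseteq> {f 0}"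
    using path_tournament_hom_const_of_ends[OF A f \<open>5 \<le> n\<close>] by blast
  moreover have "f 0 \<in> f ` {..<n}" using \<open>a < n\<close> by simp
  ultimately show ?thesis by blast
qed simp

lemma card_hom_image_path_tournament:
  assumes "reflexive_tournament A" and "hom_image_le A (path_tournament n)" and "5 \<le> n"
  shows "card (verts A) = 1 \<or> card (verts A) = n"
proof -
  obtain f where f: "is_hom f (path_tournament n) A" and image: "verts A = f ` {..<n}"
    using assms(2) unfolding hom_image_le_def by auto
  consider "inj_on f {..<n}" | "f ` {..<n} = {f 0}"
    using path_tournament_hom_inj_or_const[OF assms(1) f \<open>5 \<le> n\<close>] by blast
  then show ?thesis
    unfolding image by cases (simp_all add: card_image)
qed

lemma path_tournament_antichain:
  assumes "5 \<le> m" and "5 \<le> n" and "m \<noteq> n"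
  shows "\<not> hom_image_le (path_tournament m) (path_tournament n)"
proof
  have "reflexive_tournament (path_tournament m)"
    using finite_reflexive_tournament_path_tournament
    unfolding finite_reflexive_tournament_def by blast
  moreover assume "hom_image_le (path_tournament m) (path_tournament n)"
  ultimately have "m = 1 \<or> m = n"
    using card_hom_image_path_tournament \<open>5 \<le> n\<close> by fastforce
  then show False using assms by simp
qed

lemma Av_path_tournament:
  assumes "\<forall>H\<in>Os. finite_reflexive_tournament H" and "\<forall>H\<in>Os. card (verts H) \<noteq> 1"
    and "\<forall>H\<in>Os. card (verts H) < n" and "5 \<le> n"
  shows "Av Os (path_tournament n)"
  unfolding Av_def
proof (intro conjI ballI notI finite_reflexive_tournament_path_tournament)
  fix H assume "H \<in> Os" and "hom_image_le H (path_tournament n)"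
  then have "card (verts H) = 1 \<or> card (verts H) = n"
    using card_hom_image_path_tournament assms(1,4) by (auto simp: finite_reflexive_tournament_def)
  then show False using assms(2,3) \<open>H \<in> Os\<close> by fastforce
qed

theorem theorem5p2:
  fixes Os :: "digraph set"
  assumes "finite Os"
    and "\<forall>H\<in>Os. finite_reflexive_tournament H"
    and "\<forall>H\<in>Os. card (verts H) \<noteq> 1"
  shows "\<not> wqo_hom_class (Av Os)"
proof -
  obtain m where "\<forall>H\<in>Os. card (verts H) < m"
    using finite_nat_set_iff_bounded[of "(\<lambda>H. card (verts H)) ` Os"] \<open>finite Os\<close> by auto
  then have bound: "\<forall>H\<in>Os. card (verts H) < max 5 m + i" for i
    by (auto intro: less_le_trans[OF _ le_add1] less_le_trans[OF _ max.cobounded2])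
  define g where "g i = path_tournament (max 5 m + i)" for i
  have "\<forall>i. Av Os (g i)"
    unfolding g_def using Av_path_tournament[OF assms(2,3) bound] by simp
  moreover have "\<forall>i j. i \<noteq> j \<longrightarrow> \<not> hom_image_le (g i) (g j)"
    unfolding g_def by (simp add: path_tournament_antichain)
  ultimately show ?thesis
    unfolding wqo_hom_class_def by blast
qed

end
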